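(* Let $(X,d_X,\mu,T)$ and $(Y,d_Y,\nu,S)$ be compact metric measure-preserving systems with $T,S$ continuous, fix anchor sequences $(a_r)$ dense in $\operatorname{supp}\mu$ and $(b_r)$ dense in $\operatorname{supp}\nu$, and let $\lambda_0=\mu\otimes\nu$. (1) If $\lambda\in\mathcal J(T,S)$ and $\lambda\ne\lambda_0$, then there are integers $n,m,R\ge1$ and a $1$-Lipschitz continuous function $\psi$ on the finite anchored array cube such that $\int\psi\,d\widetilde\Phi_{n,m,R}(\lambda)\ne\int\psi\,d\widetilde\Phi_{n,m,R}(\lambda_0)$. (2) For every weak neighborhood $\mathcal U$ of $\lambda_0$ in $\mathcal J(T,S)$, there exist finitely many triples $(n_\ell,m_\ell,R_\ell)$, $1$-Lipschitz continuous functions $\psi_\ell$ on the corresponding anchored array cubes, and $\varepsilon>0$ such that every $\lambda\in\mathcal J(T,S)$ satisfying $\bigl|\int\psi_\ell\,d\widetilde\Phi_{n_\ell,m_\ell,R_\ell}(\lambda)-\int\psi_\ell\,d\widetilde\Phi_{n_\ell,m_\ell,R_\ell}(\lambda_0)\bigr|<\varepsilon$ for every $\ell$ belongs to $\mathcal U$.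
   Context: A compact metric measure-preserving system $(X,d_X,\mu,T)$: $(X,d_X)$ compact metric, $\mu$ Borel probability, $T$ Borel with $T_\#\mu=\mu$. $\mathcal J(T,S)$: Borel probability measures on $X\times Y$ with marginals $\mu,\nu$ invariant under $T\times S$, with the weak topology. For $z_i=(x_i,y_i)$: $\widetilde{\mathcal D}^X_{n,m,R}=\bigl((d_X(T^ax_i,T^bx_j))_{1\le i,j\le n,0\le a,b<m},(d_X(T^ax_i,a_r))_{1\le i\le n,0\le a<m,1\le r\le R}\bigr)$, $\widetilde{\mathcal D}^Y_{n,m,R}$ analogously with $d_Y,S,b_r$; these take values in a compact cube (the finite anchored array cube, with a product Euclidean metric), and $\widetilde\Phi_{n,m,R}(\lambda)=\mathrm{Law}_{\lambda^{\otimes n}}(\widetilde{\mathcal D}^X_{n,m,R},\widetilde{\mathcal D}^Y_{n,m,R})$. *)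

theory Defs
  imports "HOL-Probability.Probability"
begin

definition supp :: "'a::topological_space measure \<Rightarrow> 'a set" where
  "supp M = {x. \<forall>U. open U \<longrightarrow> x \<in> U \<longrightarrow> 0 < measure M U}"

definition dense_seq_in :: "(nat \<Rightarrow> 'a::topological_space) \<Rightarrow> 'a set \<Rightarrow> bool" where
  "dense_seq_in s A \<longleftrightarrow> range s \<subseteq> A \<and> A \<subseteq> closure (range s)"

definition cmmps :: "'a::metric_space measure \<Rightarrow> ('a \<Rightarrow> 'a) \<Rightarrow> bool" where
  "cmmps M T \<longleftrightarrow> compact (UNIV :: 'a set) \<and> sets M = sets borel \<and> prob_space M
     \<and> T \<in> measurable M M \<and> distr M M T = M"

definition joinings :: "'a::topological_space measure \<Rightarrow> 'b::topological_space measure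
    \<Rightarrow> ('a \<Rightarrow> 'a) \<Rightarrow> ('b \<Rightarrow> 'b) \<Rightarrow> ('a \<times> 'b) measure set" where
  "joinings \<mu> \<nu> T S = {lam. sets lam = sets (borel :: ('a \<times> 'b) measure) \<and> prob_space lam
     \<and> distr lam \<mu> fst = \<mu> \<and> distr lam \<nu> snd = \<nu> \<and> distr lam lam (map_prod T S) = lam}"

text \<open>Neighbourhood of lam0 inside J for the weak topology (subspace of the initial
  topology for the maps lam \<mapsto> \<integral> f d lam, f continuous (hence bounded) on the compact space).\<close>
definition weak_nhd_in :: "('a::topological_space) measure set \<Rightarrow> 'a measure \<Rightarrow> 'a measure set \<Rightarrow> bool" where
  "weak_nhd_in J lam0 U \<longleftrightarrow> U \<subseteq> J \<and> lam0 \<in> U \<and>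
     (\<exists>F \<delta>. finite F \<and> (\<forall>f\<in>F. continuous_on UNIV (f :: 'a \<Rightarrow> real)) \<and> \<delta> > 0 \<and>
        {lam \<in> J. \<forall>f\<in>F. \<bar>(\<integral>x. f x \<partial>lam) - (\<integral>x. f x \<partial>lam0)\<bar> < \<delta>} \<subseteq> U)"

text \<open>Coordinates of the anchored array (0-based indices):
  XP i j a b = d_X(T^a x_i, T^b x_j), XA i a r = d_X(T^a x_i, a_r), similarly YP, YA.\<close>
datatype coord = XP nat nat nat nat | XA nat nat nat | YP nat nat nat nat | YA nat nat nat

definition coordset :: "nat \<Rightarrow> nat \<Rightarrow> nat \<Rightarrow> coord set" where
  "coordset n m R =
     {XP i j a b | i j a b. i < n \<and> j < n \<and> a < m \<and> b < m} \<union>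
     {XA i a r | i a r. i < n \<and> a < m \<and> r < R} \<union>
     {YP i j a b | i j a b. i < n \<and> j < n \<and> a < m \<and> b < m} \<union>
     {YA i a r | i a r. i < n \<and> a < m \<and> r < R}"

definition anchored_array ::
  "('a::metric_space \<Rightarrow> 'a) \<Rightarrow> ('b::metric_space \<Rightarrow> 'b) \<Rightarrow> (nat \<Rightarrow> 'a) \<Rightarrow> (nat \<Rightarrow> 'b)
    \<Rightarrow> nat \<Rightarrow> nat \<Rightarrow> nat \<Rightarrow> (nat \<Rightarrow> 'a \<times> 'b) \<Rightarrow> (coord \<Rightarrow> real)" where
  "anchored_array T S as bs n m R z = (\<lambda>k\<in>coordset n m R. case k of
      XP i j a b \<Rightarrow> dist ((T ^^ a) (fst (z i))) ((T ^^ b) (fst (z j)))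
    | XA i a r \<Rightarrow> dist ((T ^^ a) (fst (z i))) (as r)
    | YP i j a b \<Rightarrow> dist ((S ^^ a) (snd (z i))) ((S ^^ b) (snd (z j)))
    | YA i a r \<Rightarrow> dist ((S ^^ a) (snd (z i))) (bs r))"

definition Phi ::
  "('a::metric_space \<Rightarrow> 'a) \<Rightarrow> ('b::metric_space \<Rightarrow> 'b) \<Rightarrow> (nat \<Rightarrow> 'a) \<Rightarrow> (nat \<Rightarrow> 'b)
    \<Rightarrow> nat \<Rightarrow> nat \<Rightarrow> nat \<Rightarrow> ('a \<times> 'b) measure \<Rightarrow> (coord \<Rightarrow> real) measure" where
  "Phi T S as bs n m R lam =
     distr (PiM {..<n} (\<lambda>_. lam)) (PiM (coordset n m R) (\<lambda>_. borel))
       (anchored_array T S as bs n m R)"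

definition array_cube :: "real \<Rightarrow> real \<Rightarrow> nat \<Rightarrow> nat \<Rightarrow> nat \<Rightarrow> (coord \<Rightarrow> real) set" where
  "array_cube dX dY n m R = PiE (coordset n m R) (\<lambda>k. case k of
      XP _ _ _ _ \<Rightarrow> {0..dX} | XA _ _ _ \<Rightarrow> {0..dX} | YP _ _ _ _ \<Rightarrow> {0..dY} | YA _ _ _ \<Rightarrow> {0..dY})"

definition cube_dist :: "coord set \<Rightarrow> (coord \<Rightarrow> real) \<Rightarrow> (coord \<Rightarrow> real) \<Rightarrow> real" where
  "cube_dist I u v = sqrt (\<Sum>k\<in>I. (u k - v k)\<^sup>2)"

definition lip1_cube :: "real \<Rightarrow> real \<Rightarrow> nat \<Rightarrow> nat \<Rightarrow> nat \<Rightarrow> ((coord \<Rightarrow> real) \<Rightarrow> real) \<Rightarrow> bool" where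
  "lip1_cube dX dY n m R \<psi> \<longleftrightarrow>
     (\<forall>u\<in>array_cube dX dY n m R. \<forall>v\<in>array_cube dX dY n m R.
        \<bar>\<psi> u - \<psi> v\<bar> \<le> cube_dist (coordset n m R) u v)"

end

theory Submission
  imports Defs
begin

(* Given a continuous f on X x Y, the inf-convolution over the first R anchor pairs
     G(x, y) = min_{r, s < R} f(a_r, b_s) + K (d(x, a_r) + d(y, b_s))
   approximates f uniformly on supp mu x supp nu once K and then R are large, because the
   anchors are dense in the supports. G sees a point only through the anchor distances
   d(x, a_r), d(y, b_s), which are coordinates of the anchored array with n = m = 1, and
   G / 2K is 1-Lipschitz in them. Every coupling of mu and nu is concentrated on
   supp mu x supp nu, so its integral of f is recovered, up to a small error, from the
   integral of G / 2K against the law Phi_{1,1,R} of the anchored array. Continuous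
   functions determine Borel probability measures and define the weak neighbourhoods,
   which gives both claims. *)

subsection \<open>Borel measures on metric spaces\<close>

lemma tendsto_integral_infdist_cutoff:
  fixes M :: "'c::metric_space measure"
  assumes sets_M: "sets M = sets borel" and "finite_measure M" and C: "closed C" "C \<noteq> {}"
  shows "(\<lambda>k. \<integral>x. max 0 (1 - real k * infdist x C) \<partial>M) \<longlonglongrightarrow> measure M C"
proof -
  interpret finite_measure M by fact
  have pointwise: "(\<lambda>k. max 0 (1 - real k * infdist x C)) \<longlonglongrightarrow> indicator C x" for x
  proof (cases "x \<in> C")
    case True
    then show ?thesis by simp
  next
    case False
    then have pos: "infdist x C > 0"
      using C infdist_pos_not_in_closed by blast
    have "eventually (\<lambda>k. 1 < real k * infdist x C) sequentially"
      using filterlim_tendsto_pos_mult_at_top[OF tendsto_const pos filterlim_real_sequentially]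
      by (simp add: filterlim_at_top_dense mult.commute)
    then have "eventually (\<lambda>k. max 0 (1 - real k * infdist x C) = 0) sequentially"
      by eventually_elim simp
    then show ?thesis
      using False by (simp add: tendsto_eventually)
  qed
  have "(\<lambda>k. \<integral>x. max 0 (1 - real k * infdist x C) \<partial>M) \<longlonglongrightarrow> (\<integral>x. indicator C x \<partial>M)"
  proof (rule integral_dominated_convergence[where w="\<lambda>_. 1"])
    show "(\<lambda>x. max 0 (1 - real k * infdist x C)) \<in> borel_measurable M" for k
      unfolding measurable_cong_sets[OF sets_M refl]
      by (intro borel_measurable_continuous_onI continuous_intros)
  qed (use C sets_M pointwise in \<open>auto simp: infdist_nonneg measurable_cong_sets[OF sets_M refl]\<close>)
  then show ?thesis
    using C sets_M by simp
qed

lemma finite_measure_eqI_integral_continuous: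
  fixes M N :: "'c::metric_space measure"
  assumes sets_M: "sets M = sets borel" and sets_N: "sets N = sets borel"
    and fin_M: "finite_measure M" and fin_N: "finite_measure N"
    and integral_eq: "\<And>f::'c \<Rightarrow> real. continuous_on UNIV f \<Longrightarrow> bounded (range f) \<Longrightarrow>
               (\<integral>x. f x \<partial>M) = (\<integral>x. f x \<partial>N)"
  shows "M = N"
proof (rule measure_eqI_generator_eq[where E="Collect closed" and \<Omega>=UNIV and A="\<lambda>_. UNIV"])
  show "sets M = sigma_sets UNIV (Collect closed)" "sets N = sigma_sets UNIV (Collect closed)"
    using sets_M sets_N by (simp_all add: borel_eq_closed)
  show "emeasure M UNIV \<noteq> \<infinity>" for i :: nat
    using fin_M sets_eq_imp_space_eq[OF sets_M] finite_measure.emeasure_finite by fastforce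
  fix C :: "'c set" assume "C \<in> Collect closed"
  then have C: "closed C" by simp
  show "emeasure M C = emeasure N C"
  proof (cases "C = {}")
    case False
    have "bounded (range (\<lambda>x. max 0 (1 - real k * infdist x C)))" for k
      by (rule boundedI[of _ 1]) (auto simp: infdist_nonneg)
    then have "(\<integral>x. max 0 (1 - real k * infdist x C) \<partial>M) = (\<integral>x. max 0 (1 - real k * infdist x C) \<partial>N)" for k
      by (intro integral_eq continuous_intros)
    then have "measure M C = measure N C"
      using tendsto_integral_infdist_cutoff[OF sets_M fin_M C False]
        tendsto_integral_infdist_cutoff[OF sets_N fin_N C False] LIMSEQ_unique by simp
    then show ?thesis
      using C sets_M sets_N by (simp add: finite_measure.emeasure_eq_measure[OF fin_M]
          finite_measure.emeasure_eq_measure[OF fin_N])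
  qed simp
qed (auto simp: Int_stable_def)

lemma closed_supp: "closed (supp M)"
proof -
  have "open (- supp M)"
  proof (subst open_subopen, intro ballI)
    fix x assume "x \<in> - supp M"
    then obtain U where U: "open U" "x \<in> U" "\<not> 0 < measure M U"
      unfolding supp_def by auto
    then have "U \<subseteq> - supp M"
      unfolding supp_def by auto
    with U show "\<exists>V. open V \<and> x \<in> V \<and> V \<subseteq> - supp M" by blast
  qed
  then show ?thesis by (simp add: closed_def)
qed

lemma AE_in_supp:
  fixes M :: "'c::{metric_space, second_countable_topology} measure"
  assumes sets_M: "sets M = sets borel" and "finite_measure M"
  shows "AE x in M. x \<in> supp M"
proof -
  interpret finite_measure M by fact
  define \<U> where "\<U> = {U. open U \<and> measure M U = 0}"
  obtain \<U>' where \<U>': "\<U>' \<subseteq> \<U>" "countable \<U>'" "\<Union>\<U>' = \<Union>\<U>"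
    using Lindelof[of \<U>] unfolding \<U>_def by blast
  have "AE x in M. x \<notin> U" if "U \<in> \<U>'" for U
  proof (rule AE_not_in)
    show "U \<in> null_sets M"
      using that \<U>' sets_M by (auto simp: \<U>_def emeasure_eq_measure intro!: null_setsI)
  qed
  then have "AE x in M. \<forall>U\<in>\<U>'. x \<notin> U"
    using \<U>'(2) by (simp add: AE_ball_countable)
  moreover have "x \<in> supp M" if x: "\<forall>U\<in>\<U>'. x \<notin> U" for x
    unfolding supp_def
  proof (intro CollectI allI impI)
    fix U assume U: "open U" "x \<in> U"
    show "0 < measure M U"
    proof (rule ccontr)
      assume "\<not> 0 < measure M U"
      then have "U \<in> \<U>"
        using U measure_nonneg[of M U] by (simp add: \<U>_def)
      with U(2) x \<U>'(3) show False by blast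
    qed
  qed
  ultimately show ?thesis
    by (rule eventually_mono)
qed

lemma borel_measurable_fst_snd:
  fixes lam :: "('a::topological_space \<times> 'b::topological_space) measure"
  assumes "sets lam = sets borel"
  shows "fst \<in> borel_measurable lam" "snd \<in> borel_measurable lam"
  using borel_measurable_continuous_onI[OF continuous_on_fst[OF continuous_on_id]]
    borel_measurable_continuous_onI[OF continuous_on_snd[OF continuous_on_id]]
  by (simp_all add: measurable_cong_sets[OF assms refl])

lemma integrable_continuous_compact:
  fixes g :: "'c::{metric_space, second_countable_topology} \<Rightarrow> real"
  assumes "compact (UNIV :: 'c set)" and "continuous_on UNIV g"
    and sets_M: "sets M = sets borel" and "finite_measure M"
  shows "integrable M g"
proof -
  interpret finite_measure M by fact
  obtain B where "\<And>x. norm (g x) \<le> B"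
    using compact_imp_bounded[OF compact_continuous_image[OF assms(2,1)]]
    unfolding bounded_iff by auto
  moreover have "g \<in> borel_measurable M"
    using borel_measurable_continuous_onI[OF assms(2)]
    by (simp add: measurable_cong_sets[OF sets_M refl])
  ultimately show ?thesis
    by (intro integrable_const_bound[where B=B]) auto
qed

lemma (in prob_space) abs_integral_diff_le:
  fixes f g :: "'a \<Rightarrow> real"
  assumes "integrable M f" "integrable M g" and "AE x in M. \<bar>f x - g x\<bar> \<le> c"
  shows "\<bar>(\<integral>x. f x \<partial>M) - (\<integral>x. g x \<partial>M)\<bar> \<le> c"
proof -
  have "\<bar>\<integral>x. f x - g x \<partial>M\<bar> \<le> (\<integral>x. \<bar>f x - g x\<bar> \<partial>M)"
    using integral_norm_bound[of M "\<lambda>x. f x - g x"] by simp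
  also have "\<dots> \<le> c"
    using assms by (intro integral_le_const) auto
  finally show ?thesis
    using assms by simp
qed

subsection \<open>Anchor envelopes\<close>

lemma compact_covered_by_finite_prefix:
  fixes s :: "nat \<Rightarrow> 'c::metric_space"
  assumes "compact A" and "A \<subseteq> closure (range s)" and "e > 0"
  obtains R where "\<forall>x\<in>A. \<exists>r<R. dist x (s r) < e"
proof -
  have "A \<subseteq> (\<Union>r. ball (s r) e)"
    using assms(2,3) by (force simp: closure_approachable dist_commute)
  then obtain D where "finite D" and D: "A \<subseteq> (\<Union>r\<in>D. ball (s r) e)"
    using compactE_image[OF assms(1), of UNIV "\<lambda>r. ball (s r) e"] by auto
  then obtain R where "D \<subseteq> {..<R}"
    using finite_nat_bounded by blast
  with D have "\<forall>x\<in>A. \<exists>r<R. dist x (s r) < e"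
    by (fastforce simp: dist_commute)
  then show thesis ..
qed

definition anchor_min :: "(nat \<Rightarrow> nat \<Rightarrow> real) \<Rightarrow> real \<Rightarrow> nat \<Rightarrow> (nat \<Rightarrow> real) \<Rightarrow> (nat \<Rightarrow> real) \<Rightarrow> real"
  where "anchor_min c K R ex ey = Min ((\<lambda>(r, s). c r s + K * (ex r + ey s)) ` ({..<R} \<times> {..<R}))"

lemma anchor_min_le:
  "r < R \<Longrightarrow> s < R \<Longrightarrow> anchor_min c K R ex ey \<le> c r s + K * (ex r + ey s)"
  unfolding anchor_min_def by (rule Min_le) force+

lemma anchor_min_greatest:
  assumes "R \<ge> 1" and "\<And>r s. r < R \<Longrightarrow> s < R \<Longrightarrow> b \<le> c r s + K * (ex r + ey s)"
  shows "b \<le> anchor_min c K R ex ey"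
proof -
  have "(0, 0) \<in> {..<R} \<times> {..<R}"
    using assms(1) by simp
  then show ?thesis
    unfolding anchor_min_def using assms(2) by (subst Min_ge_iff) auto
qed

lemma anchor_min_cong:
  "(\<And>r. r < R \<Longrightarrow> ex r = ex' r) \<Longrightarrow> (\<And>s. s < R \<Longrightarrow> ey s = ey' s) \<Longrightarrow>
    anchor_min c K R ex ey = anchor_min c K R ex' ey'"
  unfolding anchor_min_def by (intro arg_cong[where f=Min] image_cong) auto

lemma anchor_min_lipschitz:
  assumes R: "R \<ge> 1" and K: "K \<ge> 0"
    and ex: "\<And>r. r < R \<Longrightarrow> \<bar>ex r - ex' r\<bar> \<le> d" and ey: "\<And>s. s < R \<Longrightarrow> \<bar>ey s - ey' s\<bar> \<le> d"
  shows "\<bar>anchor_min c K R ex ey - anchor_min c K R ex' ey'\<bar> \<le> 2 * K * d"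
proof -
  have le: "anchor_min c K R ex ey \<le> anchor_min c K R ex' ey' + 2 * K * d"
    if ex_le: "\<And>r. r < R \<Longrightarrow> ex r \<le> ex' r + d" and ey_le: "\<And>s. s < R \<Longrightarrow> ey s \<le> ey' s + d"
    for ex ex' ey ey'
  proof -
    have "anchor_min c K R ex ey - 2 * K * d \<le> c r s + K * (ex' r + ey' s)"
      if "r < R" "s < R" for r s
    proof -
      have "ex r + ey s \<le> ex' r + ey' s + 2 * d"
        using ex_le[OF that(1)] ey_le[OF that(2)] by linarith
      then have "K * (ex r + ey s) \<le> K * (ex' r + ey' s) + 2 * K * d"
        using mult_left_mono[OF _ K] by (fastforce simp: algebra_simps)
      then show ?thesis
        using anchor_min_le[OF that, of c K ex ey] by linarith
    qed
    then show ?thesis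
      using anchor_min_greatest[OF R] by (metis diff_le_eq)
  qed
  have ex_le: "ex r \<le> ex' r + d \<and> ex' r \<le> ex r + d" if "r < R" for r
    using ex[OF that] unfolding abs_le_iff by linarith
  have ey_le: "ey s \<le> ey' s + d \<and> ey' s \<le> ey s + d" if "s < R" for s
    using ey[OF that] unfolding abs_le_iff by linarith
  have "anchor_min c K R ex ey \<le> anchor_min c K R ex' ey' + 2 * K * d"
    by (rule le) (simp_all add: ex_le ey_le)
  moreover have "anchor_min c K R ex' ey' \<le> anchor_min c K R ex ey + 2 * K * d"
    by (rule le) (simp_all add: ex_le ey_le)
  ultimately show ?thesis
    by (simp add: abs_le_iff)
qed

(* McShane-type inf-convolution of f over the first R anchor pairs. *)
definition anchor_envelope ::
  "('a::metric_space \<times> 'b::metric_space \<Rightarrow> real) \<Rightarrow> (nat \<Rightarrow> 'a) \<Rightarrow> (nat \<Rightarrow> 'b) \<Rightarrow> real \<Rightarrow> nat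
    \<Rightarrow> 'a \<times> 'b \<Rightarrow> real"
  where "anchor_envelope f as bs K R p =
    anchor_min (\<lambda>r s. f (as r, bs s)) K R (\<lambda>r. dist (fst p) (as r)) (\<lambda>s. dist (snd p) (bs s))"

lemma lipschitz_on_anchor_envelope:
  assumes "R \<ge> 1" and "K \<ge> 0"
  shows "(2 * K)-lipschitz_on UNIV (anchor_envelope f as bs K R)"
proof (rule lipschitz_onI)
  fix p q :: "'a \<times> 'b"
  have "\<bar>dist (fst p) (as r) - dist (fst q) (as r)\<bar> \<le> dist p q" for r
    using abs_dist_diff_le[of "fst p" "as r" "fst q"] dist_fst_le[of p q]
    by (simp add: dist_commute)
  moreover have "\<bar>dist (snd p) (bs s) - dist (snd q) (bs s)\<bar> \<le> dist p q" for s
    using abs_dist_diff_le[of "snd p" "bs s" "snd q"] dist_snd_le[of p q]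
    by (simp add: dist_commute)
  ultimately show "dist (anchor_envelope f as bs K R p) (anchor_envelope f as bs K R q) \<le> 2 * K * dist p q"
    unfolding anchor_envelope_def dist_real_def using assms by (intro anchor_min_lipschitz) auto
qed (use assms in simp)

lemma continuous_on_anchor_envelope:
  "R \<ge> 1 \<Longrightarrow> K \<ge> 0 \<Longrightarrow> continuous_on UNIV (anchor_envelope f as bs K R)"
  using lipschitz_on_anchor_envelope by (rule lipschitz_on_continuous_on)

lemma dist_Pair_le_add: "dist (a, b) (c, d) \<le> dist a c + dist b d"
  by (simp add: dist_Pair_Pair sqrt_sum_squares_le_sum)

lemma anchor_envelope_le:
  assumes "r < R" "s < R" and "K \<ge> 0" and "dist (fst p) (as r) \<le> e" "dist (snd p) (bs s) \<le> e"
  shows "anchor_envelope f as bs K R p \<le> f (as r, bs s) + 2 * K * e"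
proof -
  have "anchor_envelope f as bs K R p \<le> f (as r, bs s) + K * (dist (fst p) (as r) + dist (snd p) (bs s))"
    unfolding anchor_envelope_def by (rule anchor_min_le[OF assms(1,2)])
  moreover have "K * (dist (fst p) (as r) + dist (snd p) (bs s)) \<le> K * (2 * e)"
    using assms(3-5) by (intro mult_left_mono) auto
  ultimately show ?thesis
    by linarith
qed

lemma anchor_envelope_ge:
  assumes R: "R \<ge> 1" and K: "K \<ge> 0" and "\<eta> \<ge> 0"
    and bound: "\<And>q. \<bar>f q\<bar> \<le> B" and "2 * B \<le> K * d"
    and near: "\<And>q. dist q p < d \<Longrightarrow> f p - \<eta> \<le> f q"
  shows "f p - \<eta> \<le> anchor_envelope f as bs K R p"
  unfolding anchor_envelope_def
proof (rule anchor_min_greatest[OF R])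
  fix r s
  let ?q = "(as r, bs s)" and ?t = "dist (fst p) (as r) + dist (snd p) (bs s)"
  have "0 \<le> K * ?t"
    using K by simp
  show "f p - \<eta> \<le> f ?q + K * ?t"
  proof (cases "?t < d")
    case True
    then have "dist ?q p < d"
      using dist_Pair_le_add[of "as r" "bs s" "fst p" "snd p"] by (simp add: dist_commute)
    then show ?thesis
      using near[of ?q] \<open>0 \<le> K * ?t\<close> by linarith
  next
    case False
    then have "K * d \<le> K * ?t"
      using K by (intro mult_left_mono) auto
    then show ?thesis
      using bound[of p] bound[of ?q] \<open>2 * B \<le> K * d\<close> \<open>\<eta> \<ge> 0\<close> unfolding abs_le_iff by linarith
  qed
qed

lemma anchor_envelope_approximates:
  fixes f :: "'a::metric_space \<times> 'b::metric_space \<Rightarrow> real"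
  assumes unif: "uniformly_continuous_on UNIV f" and bdd: "bounded (range f)"
    and A: "compact A" "A \<subseteq> closure (range as)" and B: "compact B" "B \<subseteq> closure (range bs)"
    and \<eta>: "\<eta> > 0"
  obtains K R where "K > 0" "R \<ge> 1"
    "\<And>x y. x \<in> A \<Longrightarrow> y \<in> B \<Longrightarrow> \<bar>anchor_envelope f as bs K R (x, y) - f (x, y)\<bar> \<le> \<eta>"
proof -
  obtain d where d: "d > 0" and near: "\<And>p q. dist q p < d \<Longrightarrow> \<bar>f q - f p\<bar> < \<eta> / 2"
    using unif \<eta> unfolding uniformly_continuous_on_def dist_real_def
    by (metis UNIV_I half_gt_zero)
  obtain M where M: "\<And>q. \<bar>f q\<bar> \<le> M"
    using bdd unfolding bounded_iff by auto
  have "M \<ge> 0"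
    using M[of undefined] by linarith
  \<comment> \<open>Then anchor pairs at distance at least d cost more than the oscillation 2 M of f.\<close>
  define K where "K = 2 * M / d + 1"
  have K: "K > 0" "2 * M \<le> K * d"
    using d \<open>M \<ge> 0\<close> by (auto simp: K_def field_simps)
  define e where "e = min (d / 2) (\<eta> / (4 * K))"
  have e: "e > 0" "2 * e \<le> d" "2 * K * e \<le> \<eta> / 2"
    using d K \<eta> by (auto simp: e_def field_simps min_def)
  obtain R1 where R1: "\<forall>x\<in>A. \<exists>r<R1. dist x (as r) < e"
    using compact_covered_by_finite_prefix[OF A e(1)] by blast
  obtain R2 where R2: "\<forall>y\<in>B. \<exists>s<R2. dist y (bs s) < e"
    using compact_covered_by_finite_prefix[OF B e(1)] by blast
  define R where "R = max 1 (max R1 R2)"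
  have "\<bar>anchor_envelope f as bs K R (x, y) - f (x, y)\<bar> \<le> \<eta>" if "x \<in> A" "y \<in> B" for x y
  proof -
    obtain r s where "r < R1" "dist x (as r) < e" and "s < R2" "dist y (bs s) < e"
      using R1 R2 \<open>x \<in> A\<close> \<open>y \<in> B\<close> by blast
    then have r: "r < R" "dist x (as r) < e" and s: "s < R" "dist y (bs s) < e"
      unfolding R_def by auto
    have "dist (as r, bs s) (x, y) < d"
      using dist_Pair_le_add[of "as r" "bs s" x y] r s e(2) by (simp add: dist_commute)
    then have "f (as r, bs s) < f (x, y) + \<eta> / 2"
      using near unfolding abs_less_iff by fastforce
    moreover have "anchor_envelope f as bs K R (x, y) \<le> f (as r, bs s) + 2 * K * e"
      using r s K by (intro anchor_envelope_le) auto
    ultimately have "anchor_envelope f as bs K R (x, y) \<le> f (x, y) + \<eta>"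
      using e(3) by linarith
    moreover have "f (x, y) - \<eta> / 2 \<le> anchor_envelope f as bs K R (x, y)"
    proof (rule anchor_envelope_ge[where d=d])
      show "f (x, y) - \<eta> / 2 \<le> f q" if "dist q (x, y) < d" for q
        using near[OF that] unfolding abs_less_iff by linarith
    qed (use K \<eta> M in \<open>auto simp: R_def\<close>)
    ultimately show ?thesis
      unfolding abs_le_iff by linarith
  qed
  with K(1) show thesis
    by (intro that[of K R]) (auto simp: R_def)
qed

subsection \<open>Test functions on the anchored array cube\<close>

(* The envelope read off the anchor coordinates of a single sample; the factor 1 / 2K
   makes it 1-Lipschitz for the cube metric. *)
definition anchor_test ::
  "('a::metric_space \<times> 'b::metric_space \<Rightarrow> real) \<Rightarrow> (nat \<Rightarrow> 'a) \<Rightarrow> (nat \<Rightarrow> 'b) \<Rightarrow> real \<Rightarrow> nat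
    \<Rightarrow> (coord \<Rightarrow> real) \<Rightarrow> real"
  where "anchor_test f as bs K R u =
    anchor_min (\<lambda>r s. f (as r, bs s)) K R (\<lambda>r. u (XA 0 0 r)) (\<lambda>s. u (YA 0 0 s)) / (2 * K)"

(* Stated for Suc 0, the simp normal form of 1. *)
lemma coordset_1_1:
  "coordset (Suc 0) (Suc 0) R = {XP 0 0 0 0, YP 0 0 0 0} \<union> (\<lambda>r. XA 0 0 r) ` {..<R} \<union> (\<lambda>s. YA 0 0 s) ` {..<R}"
  by (auto simp: coordset_def)

lemma abs_le_cube_dist:
  assumes "finite I" and "k \<in> I"
  shows "\<bar>u k - v k\<bar> \<le> cube_dist I u v"
proof -
  have "(u k - v k)\<^sup>2 \<le> (\<Sum>j\<in>I. (u j - v j)\<^sup>2)"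
    using assms by (intro member_le_sum) auto
  then show ?thesis
    unfolding cube_dist_def by (metis real_sqrt_abs real_sqrt_le_mono)
qed

lemma lip1_cube_anchor_test:
  assumes K: "K > 0" and R: "R \<ge> 1"
  shows "lip1_cube dX dY 1 1 R (anchor_test f as bs K R)"
proof -
  have "\<bar>anchor_test f as bs K R u - anchor_test f as bs K R v\<bar> \<le> cube_dist (coordset 1 1 R) u v"
    for u v
  proof -
    have "\<bar>anchor_min (\<lambda>r s. f (as r, bs s)) K R (\<lambda>r. u (XA 0 0 r)) (\<lambda>s. u (YA 0 0 s))
        - anchor_min (\<lambda>r s. f (as r, bs s)) K R (\<lambda>r. v (XA 0 0 r)) (\<lambda>s. v (YA 0 0 s))\<bar>
      \<le> 2 * K * cube_dist (coordset 1 1 R) u v"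
      using K R by (intro anchor_min_lipschitz abs_le_cube_dist) (auto simp: coordset_1_1)
    then show ?thesis
      using K by (simp add: anchor_test_def diff_divide_distrib[symmetric] field_simps)
  qed
  then show ?thesis
    unfolding lip1_cube_def by blast
qed

lemma anchor_test_anchored_array:
  "anchor_test f as bs K R (anchored_array T S as bs 1 1 R z) = anchor_envelope f as bs K R (z 0) / (2 * K)"
  unfolding anchor_test_def anchor_envelope_def
  by (intro arg_cong[where f="\<lambda>x. x / (2 * K)"] anchor_min_cong)
    (simp_all add: anchored_array_def coordset_1_1)

lemma borel_measurable_anchor_test:
  "anchor_test f as bs K R \<in> borel_measurable (PiM (coordset 1 1 R) (\<lambda>_. borel))"
proof -
  have "(\<lambda>u. c + K * (u (XA 0 0 r) + u (YA 0 0 s))) \<in> borel_measurable (PiM (coordset 1 1 R) (\<lambda>_. borel))"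
    if "r < R" "s < R" for c r s
  proof -
    have [measurable]: "XA 0 0 r \<in> coordset 1 1 R" "YA 0 0 s \<in> coordset 1 1 R"
      using that by (auto simp: coordset_1_1)
    show ?thesis by measurable
  qed
  then show ?thesis
    unfolding anchor_test_def anchor_min_def
    by (intro borel_measurable_divide borel_measurable_const borel_measurable_Min) auto
qed

lemma measurable_anchored_array_1_1:
  fixes lam :: "('a::{metric_space, second_countable_topology} \<times> 'b::{metric_space, second_countable_topology}) measure"
  assumes sets_lam: "sets lam = sets borel"
  shows "anchored_array T S as bs 1 1 R \<in> PiM {..<1} (\<lambda>_. lam) \<rightarrow>\<^sub>M PiM (coordset 1 1 R) (\<lambda>_. borel)"
  unfolding anchored_array_def
proof (rule measurable_restrict)
  let ?P = "PiM {..<1::nat} (\<lambda>_. lam)"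
  have component: "(\<lambda>z. z 0) \<in> ?P \<rightarrow>\<^sub>M lam"
    by (rule measurable_component_singleton) simp
  have "(\<lambda>z. fst (z 0)) \<in> borel_measurable ?P" "(\<lambda>z. snd (z 0)) \<in> borel_measurable ?P"
    using measurable_compose[OF component borel_measurable_fst_snd(1)[OF sets_lam]]
      measurable_compose[OF component borel_measurable_fst_snd(2)[OF sets_lam]] by auto
  then have XA: "(\<lambda>z. dist (fst (z 0)) (as r)) \<in> borel_measurable ?P"
    and YA: "(\<lambda>z. dist (snd (z 0)) (bs r)) \<in> borel_measurable ?P" for r
    by (auto intro: borel_measurable_dist)
  fix k assume "k \<in> coordset 1 1 R"
  then consider "k = XP 0 0 0 0" | "k = YP 0 0 0 0" | r where "k = XA 0 0 r" | r where "k = YA 0 0 r"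
    by (auto simp: coordset_1_1)
  then show "(\<lambda>z. case k of
      XP i j a b \<Rightarrow> dist ((T ^^ a) (fst (z i))) ((T ^^ b) (fst (z j)))
    | XA i a r \<Rightarrow> dist ((T ^^ a) (fst (z i))) (as r)
    | YP i j a b \<Rightarrow> dist ((S ^^ a) (snd (z i))) ((S ^^ b) (snd (z j)))
    | YA i a r \<Rightarrow> dist ((S ^^ a) (snd (z i))) (bs r)) \<in> borel_measurable ?P"
    by cases (use XA YA in auto)
qed

lemma integral_Phi_anchor_test:
  fixes lam :: "('a::{metric_space, second_countable_topology} \<times> 'b::{metric_space, second_countable_topology}) measure"
  assumes sets_lam: "sets lam = sets borel" and "prob_space lam" and R: "R \<ge> 1" and K: "K > 0"
  shows "(\<integral>u. anchor_test f as bs K R u \<partial>Phi T S as bs 1 1 R lam)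
    = (\<integral>p. anchor_envelope f as bs K R p \<partial>lam) / (2 * K)"
proof -
  let ?P = "PiM {..<1::nat} (\<lambda>_. lam)"
  have component: "(\<lambda>z. z 0) \<in> ?P \<rightarrow>\<^sub>M lam"
    by (rule measurable_component_singleton) simp
  have envelope: "anchor_envelope f as bs K R \<in> borel_measurable lam"
    using borel_measurable_continuous_onI[OF continuous_on_anchor_envelope[OF R less_imp_le[OF K]]]
    by (simp add: measurable_cong_sets[OF sets_lam refl])
  have "(\<integral>u. anchor_test f as bs K R u \<partial>Phi T S as bs 1 1 R lam)
      = (\<integral>z. anchor_test f as bs K R (anchored_array T S as bs 1 1 R z) \<partial>?P)"
    unfolding Phi_def
    by (rule integral_distr[OF measurable_anchored_array_1_1[OF sets_lam] borel_measurable_anchor_test])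
  also have "\<dots> = (\<integral>z. anchor_envelope f as bs K R (z 0) / (2 * K) \<partial>?P)"
    by (simp only: anchor_test_anchored_array)
  also have "\<dots> = (\<integral>z. anchor_envelope f as bs K R (z 0) \<partial>?P) / (2 * K)"
    by simp
  also have "(\<integral>z. anchor_envelope f as bs K R (z 0) \<partial>?P)
      = (\<integral>p. anchor_envelope f as bs K R p \<partial>distr ?P lam (\<lambda>z. z 0))"
    by (rule integral_distr[OF component envelope, symmetric])
  also have "distr ?P lam (\<lambda>z. z 0) = lam"
    using distr_PiM_component[of "{..<1::nat}" "\<lambda>_. lam" 0] \<open>prob_space lam\<close> by simp
  finally show ?thesis .
qed

subsection \<open>Couplings\<close>

definition coupling :: "'a::topological_space measure \<Rightarrow> 'b::topological_space measure \<Rightarrow> ('a \<times> 'b) measure \<Rightarrow> bool"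
  where "coupling \<mu> \<nu> lam \<longleftrightarrow>
    sets lam = sets borel \<and> prob_space lam \<and> distr lam \<mu> fst = \<mu> \<and> distr lam \<nu> snd = \<nu>"

lemma coupling_if_joining: "lam \<in> joinings \<mu> \<nu> T S \<Longrightarrow> coupling \<mu> \<nu> lam"
  by (simp add: joinings_def coupling_def)

lemma coupling_pair_measure:
  fixes \<mu> :: "'a::{metric_space, second_countable_topology} measure"
    and \<nu> :: "'b::{metric_space, second_countable_topology} measure"
  assumes sets_\<mu>: "sets \<mu> = sets borel" and sets_\<nu>: "sets \<nu> = sets borel"
    and "prob_space \<mu>" and "prob_space \<nu>"
  shows "coupling \<mu> \<nu> (\<mu> \<Otimes>\<^sub>M \<nu>)"
proof -
  interpret \<mu>: prob_space \<mu> by fact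
  interpret \<nu>: prob_space \<nu> by fact
  have "distr (\<mu> \<Otimes>\<^sub>M \<nu>) \<nu> snd = \<nu>"
  proof (rule measure_eqI)
    fix A assume "A \<in> sets (distr (\<mu> \<Otimes>\<^sub>M \<nu>) \<nu> snd)"
    then have "A \<in> sets \<nu>" by simp
    then have "emeasure (distr (\<mu> \<Otimes>\<^sub>M \<nu>) \<nu> snd) A = emeasure (\<mu> \<Otimes>\<^sub>M \<nu>) (space \<mu> \<times> A)"
      by (auto simp: emeasure_distr space_pair_measure dest: sets.sets_into_space
          intro!: arg_cong2[where f=emeasure])
    with \<open>A \<in> sets \<nu>\<close> show "emeasure (distr (\<mu> \<Otimes>\<^sub>M \<nu>) \<nu> snd) A = emeasure \<nu> A"
      by (simp add: \<nu>.emeasure_pair_measure_Times \<mu>.emeasure_space_1)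
  qed simp
  moreover have "sets (\<mu> \<Otimes>\<^sub>M \<nu>) = sets (borel :: ('a \<times> 'b) measure)"
    using sets_pair_measure_cong[OF sets_\<mu> sets_\<nu>] borel_prod by metis
  ultimately show ?thesis
    unfolding coupling_def using \<nu>.distr_pair_fst prob_space_pair assms(3,4) by blast
qed

lemma AE_coupling_in_supp:
  fixes \<mu> :: "'a::{metric_space, second_countable_topology} measure"
    and \<nu> :: "'b::{metric_space, second_countable_topology} measure"
  assumes sets_\<mu>: "sets \<mu> = sets borel" and sets_\<nu>: "sets \<nu> = sets borel"
    and "finite_measure \<mu>" and "finite_measure \<nu>" and "coupling \<mu> \<nu> lam"
  shows "AE p in lam. fst p \<in> supp \<mu> \<and> snd p \<in> supp \<nu>"
proof -
  have sets_lam: "sets lam = sets borel" and marginals: "distr lam \<mu> fst = \<mu>" "distr lam \<nu> snd = \<nu>"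
    using \<open>coupling \<mu> \<nu> lam\<close> by (auto simp: coupling_def)
  have "fst \<in> lam \<rightarrow>\<^sub>M \<mu>" "snd \<in> lam \<rightarrow>\<^sub>M \<nu>"
    using borel_measurable_fst_snd[OF sets_lam]
    by (simp_all add: measurable_cong_sets[OF refl sets_\<mu>] measurable_cong_sets[OF refl sets_\<nu>])
  moreover have "{x \<in> space \<mu>. x \<in> supp \<mu>} \<in> sets \<mu>" "{y \<in> space \<nu>. y \<in> supp \<nu>} \<in> sets \<nu>"
    using borel_closed[OF closed_supp[of \<mu>]] borel_closed[OF closed_supp[of \<nu>]] sets_\<mu> sets_\<nu>
    by (simp_all add: sets_eq_imp_space_eq)
  moreover have "AE x in distr lam \<mu> fst. x \<in> supp \<mu>" "AE y in distr lam \<nu> snd. y \<in> supp \<nu>"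
    unfolding marginals using AE_in_supp assms by auto
  ultimately show ?thesis
    by (auto simp: AE_distr_iff intro: eventually_conj)
qed

context
  fixes \<mu> :: "'a::{metric_space, second_countable_topology} measure"
    and \<nu> :: "'b::{metric_space, second_countable_topology} measure"
    and as :: "nat \<Rightarrow> 'a" and bs :: "nat \<Rightarrow> 'b"
  assumes compact_UNIV_a: "compact (UNIV :: 'a set)" and compact_UNIV_b: "compact (UNIV :: 'b set)"
    and sets_\<mu>: "sets \<mu> = sets borel" and sets_\<nu>: "sets \<nu> = sets borel"
    and prob_\<mu>: "prob_space \<mu>" and prob_\<nu>: "prob_space \<nu>"
    and dense_as: "supp \<mu> \<subseteq> closure (range as)" and dense_bs: "supp \<nu> \<subseteq> closure (range bs)"
begin

lemma anchor_test_approximates_integral: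
  assumes f: "continuous_on UNIV f" and \<eta>: "\<eta> > 0"
  obtains K R where "K > 0" "R \<ge> 1"
    "\<And>lam T S. coupling \<mu> \<nu> lam \<Longrightarrow>
      \<bar>2 * K * (\<integral>u. anchor_test f as bs K R u \<partial>Phi T S as bs 1 1 R lam) - (\<integral>p. f p \<partial>lam)\<bar> \<le> \<eta>"
proof -
  have compact_UNIV: "compact (UNIV :: ('a \<times> 'b) set)"
    using compact_Times[OF compact_UNIV_a compact_UNIV_b] by simp
  have "compact (supp \<mu>)" "compact (supp \<nu>)"
    using compact_Int_closed[OF compact_UNIV_a closed_supp] compact_Int_closed[OF compact_UNIV_b closed_supp]
    by simp_all
  moreover have "uniformly_continuous_on UNIV f" "bounded (range f)"
    using compact_uniformly_continuous[OF f compact_UNIV]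
      compact_imp_bounded[OF compact_continuous_image[OF f compact_UNIV]] by simp_all
  ultimately obtain K R where K: "K > 0" and R: "R \<ge> 1" and approx:
    "\<And>x y. x \<in> supp \<mu> \<Longrightarrow> y \<in> supp \<nu> \<Longrightarrow> \<bar>anchor_envelope f as bs K R (x, y) - f (x, y)\<bar> \<le> \<eta>"
    using anchor_envelope_approximates[OF _ _ _ dense_as _ dense_bs \<eta>] by blast
  have "\<bar>2 * K * (\<integral>u. anchor_test f as bs K R u \<partial>Phi T S as bs 1 1 R lam) - (\<integral>p. f p \<partial>lam)\<bar> \<le> \<eta>"
    if "coupling \<mu> \<nu> lam" for lam T S
  proof -
    have sets_lam: "sets lam = sets borel" and "prob_space lam"
      using that by (auto simp: coupling_def)
    interpret prob_space lam by fact
    have "integrable lam (anchor_envelope f as bs K R)" "integrable lam f"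
      using compact_UNIV continuous_on_anchor_envelope[OF R less_imp_le[OF K]] f sets_lam
      by (auto intro: integrable_continuous_compact finite_measure_axioms)
    moreover have "AE p in lam. fst p \<in> supp \<mu> \<and> snd p \<in> supp \<nu>"
      using AE_coupling_in_supp[OF sets_\<mu> sets_\<nu> _ _ that] prob_\<mu> prob_\<nu>
      by (simp add: prob_space.finite_measure)
    then have "AE p in lam. \<bar>anchor_envelope f as bs K R p - f p\<bar> \<le> \<eta>"
      by (rule eventually_mono) (metis approx prod.collapse)
    ultimately have "\<bar>(\<integral>p. anchor_envelope f as bs K R p \<partial>lam) - (\<integral>p. f p \<partial>lam)\<bar> \<le> \<eta>"
      by (rule abs_integral_diff_le)
    then show ?thesis
      using integral_Phi_anchor_test[OF sets_lam \<open>prob_space lam\<close> R K] K by simp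
  qed
  with K R show thesis ..
qed

lemma anchor_test_controls_integral:
  fixes f :: "'a \<times> 'b \<Rightarrow> real"
  assumes f: "continuous_on UNIV f" and \<delta>: "\<delta> > 0"
  obtains R \<psi> c where "R \<ge> 1" "lip1_cube dX dY 1 1 R \<psi>" "c > 0"
    "\<And>lam lam'. coupling \<mu> \<nu> lam \<Longrightarrow> coupling \<mu> \<nu> lam' \<Longrightarrow>
      \<bar>(\<integral>u. \<psi> u \<partial>Phi T S as bs 1 1 R lam) - (\<integral>u. \<psi> u \<partial>Phi T S as bs 1 1 R lam')\<bar> < c \<Longrightarrow>
      \<bar>(\<integral>p. f p \<partial>lam) - (\<integral>p. f p \<partial>lam')\<bar> < \<delta>"
proof -
  have "\<delta> / 4 > 0"
    using \<delta> by simp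
  obtain K R where K: "K > 0" and R: "R \<ge> 1" and approx: "\<And>lam T S. coupling \<mu> \<nu> lam \<Longrightarrow>
      \<bar>2 * K * (\<integral>u. anchor_test f as bs K R u \<partial>Phi T S as bs 1 1 R lam) - (\<integral>p. f p \<partial>lam)\<bar> \<le> \<delta> / 4"
    using anchor_test_approximates_integral[OF f \<open>\<delta> / 4 > 0\<close>] by blast
  show thesis
  proof (rule that[OF R lip1_cube_anchor_test[OF K R]])
    show "\<delta> / (4 * K) > 0"
      using K \<delta> by simp
    fix lam lam' assume "coupling \<mu> \<nu> lam" "coupling \<mu> \<nu> lam'"
    let ?a = "\<lambda>lam. \<integral>u. anchor_test f as bs K R u \<partial>Phi T S as bs 1 1 R lam"
    assume close: "\<bar>?a lam - ?a lam'\<bar> < \<delta> / (4 * K)"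
    have "\<bar>2 * K * ?a lam - 2 * K * ?a lam'\<bar> = 2 * K * \<bar>?a lam - ?a lam'\<bar>"
      using K by (simp add: abs_mult right_diff_distrib[symmetric])
    also have "\<dots> < 2 * K * (\<delta> / (4 * K))"
      using close K by (intro mult_strict_left_mono) auto
    also have "\<dots> = \<delta> / 2"
      using K by simp
    finally have "\<bar>2 * K * ?a lam - 2 * K * ?a lam'\<bar> < \<delta> / 2" .
    with approx[of lam T S, OF \<open>coupling \<mu> \<nu> lam\<close>] approx[of lam' T S, OF \<open>coupling \<mu> \<nu> lam'\<close>]
    show "\<bar>(\<integral>p. f p \<partial>lam) - (\<integral>p. f p \<partial>lam')\<bar> < \<delta>"
      unfolding abs_le_iff abs_less_iff by linarith
  qed
qed

lemma anchor_test_separates_couplings: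
  assumes "coupling \<mu> \<nu> lam" "coupling \<mu> \<nu> lam'" "lam \<noteq> lam'"
  shows "\<exists>R \<psi>. R \<ge> 1 \<and> lip1_cube dX dY 1 1 R \<psi> \<and>
    (\<integral>u. \<psi> u \<partial>Phi T S as bs 1 1 R lam) \<noteq> (\<integral>u. \<psi> u \<partial>Phi T S as bs 1 1 R lam')"
proof -
  obtain f :: "'a \<times> 'b \<Rightarrow> real" where f: "continuous_on UNIV f"
    and "(\<integral>p. f p \<partial>lam) \<noteq> (\<integral>p. f p \<partial>lam')"
    using finite_measure_eqI_integral_continuous[of lam lam'] assms
    by (auto simp: coupling_def prob_space.finite_measure)
  define \<delta> where "\<delta> = \<bar>(\<integral>p. f p \<partial>lam) - (\<integral>p. f p \<partial>lam')\<bar>"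
  then have "\<delta> > 0"
    using \<open>(\<integral>p. f p \<partial>lam) \<noteq> (\<integral>p. f p \<partial>lam')\<close> by simp
  obtain R \<psi> c where R: "R \<ge> 1" and lip: "lip1_cube dX dY 1 1 R \<psi>" and "c > 0" and control:
    "\<And>lam lam'. coupling \<mu> \<nu> lam \<Longrightarrow> coupling \<mu> \<nu> lam' \<Longrightarrow>
      \<bar>(\<integral>u. \<psi> u \<partial>Phi T S as bs 1 1 R lam) - (\<integral>u. \<psi> u \<partial>Phi T S as bs 1 1 R lam')\<bar> < c \<Longrightarrow>
      \<bar>(\<integral>p. f p \<partial>lam) - (\<integral>p. f p \<partial>lam')\<bar> < \<delta>"
    using anchor_test_controls_integral[OF f \<open>\<delta> > 0\<close>] by blast
  have "(\<integral>u. \<psi> u \<partial>Phi T S as bs 1 1 R lam) \<noteq> (\<integral>u. \<psi> u \<partial>Phi T S as bs 1 1 R lam')"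
  proof
    assume "(\<integral>u. \<psi> u \<partial>Phi T S as bs 1 1 R lam) = (\<integral>u. \<psi> u \<partial>Phi T S as bs 1 1 R lam')"
    then have "\<delta> < \<delta>"
      using control[OF assms(1,2)] \<open>c > 0\<close> unfolding \<delta>_def by simp
    then show False
      by simp
  qed
  with R lip show ?thesis
    by blast
qed

lemma anchor_tests_control_finitely_many_integrals:
  fixes F :: "('a \<times> 'b \<Rightarrow> real) set"
  assumes "finite F" and F: "\<forall>f\<in>F. continuous_on UNIV f" and \<delta>: "\<delta> > 0"
  obtains L Rs \<psi>s \<epsilon> where "\<forall>l<(L::nat). Rs l \<ge> 1 \<and> lip1_cube dX dY 1 1 (Rs l) (\<psi>s l)" "\<epsilon> > 0"
    "\<And>lam lam'. coupling \<mu> \<nu> lam \<Longrightarrow> coupling \<mu> \<nu> lam' \<Longrightarrow>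
      \<forall>l<L. \<bar>(\<integral>u. \<psi>s l u \<partial>Phi T S as bs 1 1 (Rs l) lam) - (\<integral>u. \<psi>s l u \<partial>Phi T S as bs 1 1 (Rs l) lam')\<bar> < \<epsilon> \<Longrightarrow>
      \<forall>f\<in>F. \<bar>(\<integral>p. f p \<partial>lam) - (\<integral>p. f p \<partial>lam')\<bar> < \<delta>"
proof -
  have "\<exists>R \<psi> c. R \<ge> 1 \<and> lip1_cube dX dY 1 1 R \<psi> \<and> c > 0 \<and>
    (\<forall>lam lam'. coupling \<mu> \<nu> lam \<longrightarrow> coupling \<mu> \<nu> lam' \<longrightarrow>
      \<bar>(\<integral>u. \<psi> u \<partial>Phi T S as bs 1 1 R lam) - (\<integral>u. \<psi> u \<partial>Phi T S as bs 1 1 R lam')\<bar> < c \<longrightarrow>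
      \<bar>(\<integral>p. f p \<partial>lam) - (\<integral>p. f p \<partial>lam')\<bar> < \<delta>)" if "f \<in> F" for f
  proof -
    obtain R \<psi> c where "R \<ge> 1" "lip1_cube dX dY 1 1 R \<psi>" "c > 0"
      "\<And>lam lam'. coupling \<mu> \<nu> lam \<Longrightarrow> coupling \<mu> \<nu> lam' \<Longrightarrow>
        \<bar>(\<integral>u. \<psi> u \<partial>Phi T S as bs 1 1 R lam) - (\<integral>u. \<psi> u \<partial>Phi T S as bs 1 1 R lam')\<bar> < c \<Longrightarrow>
        \<bar>(\<integral>p. f p \<partial>lam) - (\<integral>p. f p \<partial>lam')\<bar> < \<delta>"
      using anchor_test_controls_integral[OF F[rule_format, OF \<open>f \<in> F\<close>] \<delta>] by blast
    then show ?thesis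
      by blast
  qed
  then obtain R \<psi> c where test: "\<And>f. f \<in> F \<Longrightarrow> R f \<ge> 1 \<and> lip1_cube dX dY 1 1 (R f) (\<psi> f) \<and> c f > 0 \<and>
    (\<forall>lam lam'. coupling \<mu> \<nu> lam \<longrightarrow> coupling \<mu> \<nu> lam' \<longrightarrow>
      \<bar>(\<integral>u. \<psi> f u \<partial>Phi T S as bs 1 1 (R f) lam) - (\<integral>u. \<psi> f u \<partial>Phi T S as bs 1 1 (R f) lam')\<bar> < c f \<longrightarrow>
      \<bar>(\<integral>p. f p \<partial>lam) - (\<integral>p. f p \<partial>lam')\<bar> < \<delta>)"
    by metis
  obtain fs where fs: "set fs = F"
    using finite_list[OF \<open>finite F\<close>] by blast
  define \<epsilon> where "\<epsilon> = Min (insert 1 (c ` F))"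
  have "\<forall>l<length fs. R (fs ! l) \<ge> 1 \<and> lip1_cube dX dY 1 1 (R (fs ! l)) (\<psi> (fs ! l))"
    using test fs nth_mem by blast
  moreover have "\<epsilon> > 0"
    using test \<open>finite F\<close> by (auto simp: \<epsilon>_def)
  moreover have "\<forall>f\<in>F. \<bar>(\<integral>p. f p \<partial>lam) - (\<integral>p. f p \<partial>lam')\<bar> < \<delta>"
    if "coupling \<mu> \<nu> lam" "coupling \<mu> \<nu> lam'" and close: "\<forall>l<length fs.
      \<bar>(\<integral>u. \<psi> (fs ! l) u \<partial>Phi T S as bs 1 1 (R (fs ! l)) lam)
        - (\<integral>u. \<psi> (fs ! l) u \<partial>Phi T S as bs 1 1 (R (fs ! l)) lam')\<bar> < \<epsilon>" for lam lam'
  proof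
    fix f assume "f \<in> F"
    then obtain l where "l < length fs" "fs ! l = f"
      using fs by (auto simp: in_set_conv_nth)
    moreover have "\<epsilon> \<le> c f"
      using \<open>f \<in> F\<close> \<open>finite F\<close> by (simp add: \<epsilon>_def)
    ultimately show "\<bar>(\<integral>p. f p \<partial>lam) - (\<integral>p. f p \<partial>lam')\<bar> < \<delta>"
      using test[OF \<open>f \<in> F\<close>] close that by fastforce
  qed
  ultimately show thesis
    by (rule that)
qed

lemma weak_nhd_contains_anchor_test_nhd:
  assumes "weak_nhd_in J lam0 U" and J: "\<And>lam. lam \<in> J \<Longrightarrow> coupling \<mu> \<nu> lam"
    and lam0: "coupling \<mu> \<nu> lam0"
  shows "\<exists>L ns ms Rs \<psi>s \<epsilon>. (\<epsilon>::real) > 0 \<and>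
    (\<forall>l<(L::nat). ns l \<ge> 1 \<and> ms l \<ge> 1 \<and> Rs l \<ge> 1 \<and> lip1_cube dX dY (ns l) (ms l) (Rs l) (\<psi>s l)) \<and>
    (\<forall>lam\<in>J. (\<forall>l<L. \<bar>(\<integral>u. \<psi>s l u \<partial>Phi T S as bs (ns l) (ms l) (Rs l) lam)
      - (\<integral>u. \<psi>s l u \<partial>Phi T S as bs (ns l) (ms l) (Rs l) lam0)\<bar> < \<epsilon>) \<longrightarrow> lam \<in> U)"
proof -
  obtain F :: "('a \<times> 'b \<Rightarrow> real) set" and \<delta> :: real
    where F: "finite F" "\<forall>f\<in>F. continuous_on UNIV f" and "\<delta> > 0"
    and U: "{lam \<in> J. \<forall>f\<in>F. \<bar>(\<integral>x. f x \<partial>lam) - (\<integral>x. f x \<partial>lam0)\<bar> < \<delta>} \<subseteq> U"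
    using \<open>weak_nhd_in J lam0 U\<close> unfolding weak_nhd_in_def by blast
  obtain L :: nat and Rs \<psi>s \<epsilon> where tests: "\<forall>l<L. Rs l \<ge> 1 \<and> lip1_cube dX dY 1 1 (Rs l) (\<psi>s l)"
    and "\<epsilon> > 0"
    and control: "\<And>lam lam'. coupling \<mu> \<nu> lam \<Longrightarrow> coupling \<mu> \<nu> lam' \<Longrightarrow>
      \<forall>l<L. \<bar>(\<integral>u. \<psi>s l u \<partial>Phi T S as bs 1 1 (Rs l) lam)
        - (\<integral>u. \<psi>s l u \<partial>Phi T S as bs 1 1 (Rs l) lam')\<bar> < \<epsilon> \<Longrightarrow>
      \<forall>f\<in>F. \<bar>(\<integral>p. f p \<partial>lam) - (\<integral>p. f p \<partial>lam')\<bar> < \<delta>"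
    using anchor_tests_control_finitely_many_integrals[OF F \<open>\<delta> > 0\<close>] by blast
  have "lam \<in> U" if "lam \<in> J" and "\<forall>l<L. \<bar>(\<integral>u. \<psi>s l u \<partial>Phi T S as bs 1 1 (Rs l) lam)
      - (\<integral>u. \<psi>s l u \<partial>Phi T S as bs 1 1 (Rs l) lam0)\<bar> < \<epsilon>" for lam
    using U control[OF J lam0 that(2)] that(1) by blast
  with \<open>\<epsilon> > 0\<close> tests show ?thesis
    by (intro exI[of _ L] exI[of _ "\<lambda>_. 1"] exI[of _ "\<lambda>_. 1"] exI[of _ Rs] exI[of _ \<psi>s] exI[of _ \<epsilon>])
      simp
qed

end

theorem theorem26:
  fixes \<mu> :: "'a::{metric_space, second_countable_topology} measure"
    and \<nu> :: "'b::{metric_space, second_countable_topology} measure"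
    and T :: "'a \<Rightarrow> 'a" and S :: "'b \<Rightarrow> 'b"
    and as :: "nat \<Rightarrow> 'a" and bs :: "nat \<Rightarrow> 'b"
  assumes X: "cmmps \<mu> T" and Y: "cmmps \<nu> S"
    and Tc: "continuous_on UNIV T" and Sc: "continuous_on UNIV S"
    and as: "dense_seq_in as (supp \<mu>)" and bs: "dense_seq_in bs (supp \<nu>)"
  defines "dX \<equiv> diameter (UNIV :: 'a set)" and "dY \<equiv> diameter (UNIV :: 'b set)"
    and "lam0 \<equiv> \<mu> \<Otimes>\<^sub>M \<nu>"
    and "J \<equiv> joinings \<mu> \<nu> T S"
  shows
    "(\<forall>lam\<in>J. lam \<noteq> lam0 \<longrightarrow>
        (\<exists>n m R \<psi>. n \<ge> 1 \<and> m \<ge> 1 \<and> R \<ge> 1 \<and> lip1_cube dX dY n m R \<psi> \<and>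
           (\<integral>u. \<psi> u \<partial>Phi T S as bs n m R lam) \<noteq> (\<integral>u. \<psi> u \<partial>Phi T S as bs n m R lam0)))
     \<and>
     (\<forall>U. weak_nhd_in J lam0 U \<longrightarrow>
        (\<exists>L ns ms Rs \<psi>s \<epsilon>. (\<epsilon>::real) > 0 \<and>
           (\<forall>l<(L::nat). ns l \<ge> 1 \<and> ms l \<ge> 1 \<and> Rs l \<ge> 1 \<and>
              lip1_cube dX dY (ns l) (ms l) (Rs l) (\<psi>s l)) \<and>
           (\<forall>lam\<in>J. (\<forall>l<L. \<bar>(\<integral>u. \<psi>s l u \<partial>Phi T S as bs (ns l) (ms l) (Rs l) lam)
                        - (\<integral>u. \<psi>s l u \<partial>Phi T S as bs (ns l) (ms l) (Rs l) lam0)\<bar> < \<epsilon>)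
                 \<longrightarrow> lam \<in> U)))"
proof -
  have spaces: "compact (UNIV :: 'a set)" "compact (UNIV :: 'b set)"
    "sets \<mu> = sets borel" "sets \<nu> = sets borel" "prob_space \<mu>" "prob_space \<nu>"
    using X Y by (auto simp: cmmps_def)
  have anchors: "supp \<mu> \<subseteq> closure (range as)" "supp \<nu> \<subseteq> closure (range bs)"
    using as bs by (auto simp: dense_seq_in_def)
  note setting = spaces anchors
  have lam0: "coupling \<mu> \<nu> lam0"
    unfolding lam0_def by (rule coupling_pair_measure[OF spaces(3-6)])
  have couplings: "\<And>lam. lam \<in> J \<Longrightarrow> coupling \<mu> \<nu> lam"
    unfolding J_def by (rule coupling_if_joining)
  show ?thesis
  proof (intro conjI ballI allI impI)
    fix lam assume "lam \<in> J" "lam \<noteq> lam0"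
    then show "\<exists>n m R \<psi>. n \<ge> 1 \<and> m \<ge> 1 \<and> R \<ge> 1 \<and> lip1_cube dX dY n m R \<psi> \<and>
        (\<integral>u. \<psi> u \<partial>Phi T S as bs n m R lam) \<noteq> (\<integral>u. \<psi> u \<partial>Phi T S as bs n m R lam0)"
      using anchor_test_separates_couplings[OF setting couplings lam0] by (metis order_refl)
  next
    fix U assume "weak_nhd_in J lam0 U"
    then show "\<exists>L ns ms Rs \<psi>s \<epsilon>. (\<epsilon>::real) > 0 \<and>
        (\<forall>l<(L::nat). ns l \<ge> 1 \<and> ms l \<ge> 1 \<and> Rs l \<ge> 1 \<and> lip1_cube dX dY (ns l) (ms l) (Rs l) (\<psi>s l)) \<and>
        (\<forall>lam\<in>J. (\<forall>l<L. \<bar>(\<integral>u. \<psi>s l u \<partial>Phi T S as bs (ns l) (ms l) (Rs l) lam)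
          - (\<integral>u. \<psi>s l u \<partial>Phi T S as bs (ns l) (ms l) (Rs l) lam0)\<bar> < \<epsilon>) \<longrightarrow> lam \<in> U)"
      by (rule weak_nhd_contains_anchor_test_nhd[OF setting _ couplings lam0])
  qed
qed

end
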